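(* Let $P\subseteq\mathbb{C}$ be a finitely generated field extension of $\mathbb{Q}$, $C=P\cap\mu$, $a\in P^\times$ and $k>1$ an integer. The following are equivalent: (i) $a$ is $k$-simple in $P$; (ii) for every divisor $m>1$ of $k$ there are no $\alpha\in P$ and root of unity $\epsilon$ with $a=\alpha^m\epsilon$; (iii) for every divisor $m>1$ of $k$, the image of $a$ in the quotient group $P^{\times}/C$ has no $m$-th root in $P^\times/C$.
   Context: $\mu$ is the group of all roots of unity in $\mathbb{C}^\times$. For an integer $k>1$, a nonzero $a\in P$ is $k$-simple (in $P$) if $a\notin\mu$ and for all $b\in P$, $\epsilon\in\mu$ and integers $d$, $a^d=b^k\epsilon$ implies $k\mid d$. *)

theory Defs
  imports Complex_Main "HOL-Algebra.Coset"
begin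

definition roots_of_unity :: "complex set" where
  "roots_of_unity = {z. \<exists>n::nat. n > 0 \<and> z ^ n = 1}"

definition is_subfield :: "complex set \<Rightarrow> bool" where
  "is_subfield F \<longleftrightarrow> 0 \<in> F \<and> 1 \<in> F \<and>
     (\<forall>x\<in>F. \<forall>y\<in>F. x + y \<in> F \<and> x - y \<in> F \<and> x * y \<in> F) \<and>
     (\<forall>x\<in>F. x \<noteq> 0 \<longrightarrow> inverse x \<in> F)"

text \<open>Subfield of C finitely generated over Q (Q is contained in every subfield of C):
  the smallest subfield containing some finite set S.\<close>
definition fin_gen_field :: "complex set \<Rightarrow> bool" where
  "fin_gen_field P \<longleftrightarrow> is_subfield P \<and>
     (\<exists>S. finite S \<and> S \<subseteq> P \<and> P = \<Inter>{F. is_subfield F \<and> S \<subseteq> F})"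

definition k_simple :: "complex set \<Rightarrow> nat \<Rightarrow> complex \<Rightarrow> bool" where
  "k_simple P k a \<longleftrightarrow> a \<noteq> 0 \<and> a \<notin> roots_of_unity \<and>
     (\<forall>b\<in>P. \<forall>\<epsilon>\<in>roots_of_unity. \<forall>d::int.
        a powi d = b ^ k * \<epsilon> \<longrightarrow> int k dvd d)"

definition units_grp :: "complex set \<Rightarrow> complex monoid" where
  "units_grp P = \<lparr>carrier = P - {0}, monoid.mult = (*), one = 1\<rparr>"

end

theory Submission
  imports Defs
begin

text \<open>If a = \<alpha>^m \<epsilon> with 1 < m dividing k, then a^(k/m) = \<alpha>^k \<epsilon>^(k/m) while k does not
  divide k/m, so a is not k-simple. Conversely, if a^d = b^k \<epsilon> with k not dividing d, write
  g = gcd d k, d = g d' and k = g m, so that m > 1. Then (a^d' / b^m)^g = \<epsilon>, hence a^d' is an m-th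
  power up to a root of unity; as d' is prime to m, a Bezout relation u d' + v m = 1 turns this into
  a = (b^u a^v)^m times a root of unity. Condition (iii) is (ii) read in P^x/C, because the root of
  unity a / \<alpha>^m automatically lies in P.\<close>

lemma (in normal) FactGroup_pow_eq_rcos_iff:
  assumes "a \<in> carrier G"
  shows "(\<exists>y\<in>carrier (G Mod H). y [^]\<^bsub>G Mod H\<^esub> (m::nat) = H #> a) \<longleftrightarrow>
         (\<exists>x\<in>carrier G. a \<in> H #> x [^] m)"
proof
  assume "\<exists>y\<in>carrier (G Mod H). y [^]\<^bsub>G Mod H\<^esub> m = H #> a"
  then obtain x where x: "x \<in> carrier G" and "(H #> x) [^]\<^bsub>G Mod H\<^esub> m = H #> a"
    by (auto simp: carrier_FactGroup)
  then have "H #> x [^] m = H #> a" by (simp add: FactGroup_pow)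
  then show "\<exists>x\<in>carrier G. a \<in> H #> x [^] m"
    using x assms repr_independenceD[OF subgroup_axioms] by blast
next
  assume "\<exists>x\<in>carrier G. a \<in> H #> x [^] m"
  then obtain x where x: "x \<in> carrier G" and "a \<in> H #> x [^] m" by blast
  then have "(H #> x) [^]\<^bsub>G Mod H\<^esub> m = H #> a"
    using repr_independence[OF _ _ subgroup_axioms] by (simp add: FactGroup_pow)
  with x show "\<exists>y\<in>carrier (G Mod H). y [^]\<^bsub>G Mod H\<^esub> m = H #> a"
    by (auto simp: carrier_FactGroup)
qed

lemma roots_of_unity_mult:
  assumes "x \<in> roots_of_unity" "y \<in> roots_of_unity"
  shows "x * y \<in> roots_of_unity"
proof -
  obtain n m :: nat where "n > 0" "x ^ n = 1" "m > 0" "y ^ m = 1"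
    using assms by (auto simp: roots_of_unity_def)
  then have "x ^ (n * m) = 1" "y ^ (n * m) = 1"
    by (metis power_mult power_one mult.commute)+
  then have "(x * y) ^ (n * m) = 1" by (simp add: power_mult_distrib)
  moreover have "n * m > 0" using \<open>n > 0\<close> \<open>m > 0\<close> by simp
  ultimately show ?thesis unfolding roots_of_unity_def by blast
qed

lemma roots_of_unity_power_int:
  assumes "x \<in> roots_of_unity"
  shows "x powi j \<in> roots_of_unity"
proof -
  obtain n :: nat where "n > 0" "x ^ n = 1" using assms by (auto simp: roots_of_unity_def)
  moreover have "(x powi j) ^ n = (x ^ n) powi j"
    by (simp add: power_int_power power_int_power' mult.commute)
  ultimately show ?thesis by (auto simp: roots_of_unity_def)
qed

lemma roots_of_unity_power: "x \<in> roots_of_unity \<Longrightarrow> x ^ j \<in> roots_of_unity"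
  using roots_of_unity_power_int[of x "int j"] by simp

lemma roots_of_unity_of_power:
  assumes "x ^ g \<in> roots_of_unity" "g > 0"
  shows "x \<in> roots_of_unity"
proof -
  obtain n :: nat where "n > 0" "(x ^ g) ^ n = 1" using assms(1) by (auto simp: roots_of_unity_def)
  then have "x ^ (g * n) = 1" by (simp add: power_mult)
  moreover have "g * n > 0" using \<open>g > 0\<close> \<open>n > 0\<close> by simp
  ultimately show ?thesis unfolding roots_of_unity_def by blast
qed

lemma roots_of_unity_nonzero: "x \<in> roots_of_unity \<Longrightarrow> x \<noteq> 0"
  by (auto simp: roots_of_unity_def zero_power)

lemma subfield_mult: "is_subfield P \<Longrightarrow> x \<in> P \<Longrightarrow> y \<in> P \<Longrightarrow> x * y \<in> P"
  by (simp add: is_subfield_def)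

lemma subfield_inverse: "is_subfield P \<Longrightarrow> x \<in> P \<Longrightarrow> inverse x \<in> P"
  by (cases "x = 0") (auto simp: is_subfield_def)

lemma subfield_power: "is_subfield P \<Longrightarrow> x \<in> P \<Longrightarrow> x ^ n \<in> P"
  by (induction n) (auto simp: is_subfield_def)

lemma subfield_power_int: "is_subfield P \<Longrightarrow> x \<in> P \<Longrightarrow> x powi n \<in> P"
  by (auto simp: power_int_def subfield_power subfield_inverse)

definition power_up_to_root_of_unity :: "complex set \<Rightarrow> nat \<Rightarrow> complex \<Rightarrow> bool" where
  "power_up_to_root_of_unity P m a \<longleftrightarrow> (\<exists>\<alpha>\<in>P. \<exists>\<epsilon>\<in>roots_of_unity. a = \<alpha> ^ m * \<epsilon>)"

lemma k_simple_imp_not_power_up_to_root_of_unity: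
  assumes "k_simple P k a" "m > 1" "m dvd k" "k > 0"
  shows "\<not> power_up_to_root_of_unity P m a"
proof
  assume "power_up_to_root_of_unity P m a"
  then obtain \<alpha> \<epsilon> where "\<alpha> \<in> P" "\<epsilon> \<in> roots_of_unity" and a: "a = \<alpha> ^ m * \<epsilon>"
    by (auto simp: power_up_to_root_of_unity_def)
  obtain q where k: "k = m * q" using \<open>m dvd k\<close> by blast
  have "a powi int q = \<alpha> ^ k * \<epsilon> ^ q"
    using a k by (simp add: power_mult_distrib power_mult)
  with \<open>k_simple P k a\<close> \<open>\<alpha> \<in> P\<close> roots_of_unity_power[OF \<open>\<epsilon> \<in> roots_of_unity\<close>]
  have "int k dvd int q" unfolding k_simple_def by blast
  moreover have "0 < q" "q < k" using k \<open>k > 0\<close> \<open>m > 1\<close> by auto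
  ultimately show False by (simp add: nat_dvd_not_less)
qed

lemma power_up_to_root_of_unity_coprime_exponent:
  assumes P: "is_subfield P" and "a \<in> P" "a \<noteq> 0" and "coprime d (int m)"
    and "power_up_to_root_of_unity P m (a powi d)"
  shows "power_up_to_root_of_unity P m a"
proof -
  obtain b t where "b \<in> P" "t \<in> roots_of_unity" and ad: "a powi d = b ^ m * t"
    using assms(5) unfolding power_up_to_root_of_unity_def by blast
  obtain u v where uv: "u * d + v * int m = 1"
    using bezout_int[of d "int m"] \<open>coprime d (int m)\<close> by (auto simp: coprime_iff_gcd_eq_1)
  have "(b ^ m) powi u = (b powi u) ^ m"
    by (simp add: power_int_power power_int_power' mult.commute)
  have "a = a powi (d * u + v * int m)" using uv by (simp add: mult.commute)
  also have "\<dots> = a powi (d * u) * a powi (v * int m)"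
    using \<open>a \<noteq> 0\<close> by (simp add: power_int_add)
  also have "\<dots> = (b ^ m * t) powi u * (a powi v) ^ m"
    by (simp only: power_int_mult[of a d u] ad power_int_power'[of a v m])
  also have "\<dots> = (b powi u * a powi v) ^ m * t powi u"
    by (simp add: power_int_mult_distrib power_mult_distrib \<open>(b ^ m) powi u = (b powi u) ^ m\<close>
        mult_ac)
  finally have "a = (b powi u * a powi v) ^ m * t powi u" .
  moreover have "b powi u * a powi v \<in> P"
    using P \<open>b \<in> P\<close> \<open>a \<in> P\<close> by (simp add: subfield_mult subfield_power_int)
  ultimately show ?thesis
    using roots_of_unity_power_int[OF \<open>t \<in> roots_of_unity\<close>]
    unfolding power_up_to_root_of_unity_def by blast
qed

lemma power_up_to_root_of_unity_of_power_int_eq: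
  assumes "b \<in> P" "\<epsilon> \<in> roots_of_unity" "g > 0" "a \<noteq> 0"
    and eq: "a powi (int g * d) = b ^ (g * m) * \<epsilon>"
  shows "power_up_to_root_of_unity P m (a powi d)"
proof -
  have eq': "a powi (int g * d) = (b ^ m) ^ g * \<epsilon>"
    using eq by (simp add: power_mult[symmetric] mult.commute)
  then have "b ^ m \<noteq> 0"
    using \<open>a \<noteq> 0\<close> \<open>g > 0\<close> by (metis mult_zero_left power_int_eq_0_iff zero_power)
  define t where "t = a powi d / b ^ m"
  have "t ^ g = a powi (int g * d) / (b ^ m) ^ g"
    by (simp add: t_def power_divide power_int_power' mult.commute)
  then have "t ^ g = \<epsilon>"
    using eq' \<open>b ^ m \<noteq> 0\<close> by (metis nonzero_mult_div_cancel_left power_not_zero)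
  then have "t \<in> roots_of_unity" using roots_of_unity_of_power \<open>\<epsilon> \<in> roots_of_unity\<close> \<open>g > 0\<close> by blast
  moreover have "a powi d = b ^ m * t" using \<open>b ^ m \<noteq> 0\<close> by (simp add: t_def)
  ultimately show ?thesis using \<open>b \<in> P\<close> unfolding power_up_to_root_of_unity_def by blast
qed

lemma k_simple_if_not_power_up_to_root_of_unity:
  assumes P: "is_subfield P" and "a \<in> P" "a \<noteq> 0" "k > 1"
    and not_power: "\<And>m. m > 1 \<Longrightarrow> m dvd k \<Longrightarrow> \<not> power_up_to_root_of_unity P m a"
  shows "k_simple P k a"
proof -
  have "1 \<in> P" using P by (simp add: is_subfield_def)
  then have "a \<notin> roots_of_unity"
    using not_power[of k] \<open>k > 1\<close> unfolding power_up_to_root_of_unity_def by force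
  moreover have "int k dvd d"
    if "b \<in> P" "\<epsilon> \<in> roots_of_unity" and eq: "a powi d = b ^ k * \<epsilon>" for b \<epsilon> d
  proof (rule ccontr)
    assume "\<not> int k dvd d"
    define g where "g = nat (gcd d (int k))"
    define d' where "d' = d div gcd d (int k)"
    define m where "m = nat (int k div gcd d (int k))"
    have g: "int g = gcd d (int k)" by (simp add: g_def)
    have "g > 0" using \<open>k > 1\<close> by (simp add: g_def)
    have m: "int m = int k div gcd d (int k)"
      using \<open>k > 1\<close> by (simp add: m_def pos_imp_zdiv_nonneg_iff)
    have "coprime d' (int m)"
      unfolding d'_def m using \<open>k > 1\<close> by (intro div_gcd_coprime) simp
    have d: "d = int g * d'" by (simp add: g d'_def)
    have "int k = int g * int m" by (simp add: g m)
    then have k: "k = g * m" by (metis of_nat_eq_iff of_nat_mult)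
    have "m \<noteq> 0" using k \<open>k > 1\<close> by (intro notI) simp
    moreover have "m \<noteq> 1" using k d \<open>\<not> int k dvd d\<close> by auto
    ultimately have "m > 1" "m dvd k" using k by auto
    have "power_up_to_root_of_unity P m (a powi d')"
      using power_up_to_root_of_unity_of_power_int_eq \<open>b \<in> P\<close> \<open>\<epsilon> \<in> roots_of_unity\<close> \<open>g > 0\<close>
        \<open>a \<noteq> 0\<close> eq d k by metis
    then have "power_up_to_root_of_unity P m a"
      using power_up_to_root_of_unity_coprime_exponent P \<open>a \<in> P\<close> \<open>a \<noteq> 0\<close> \<open>coprime d' (int m)\<close>
      by blast
    with not_power \<open>m > 1\<close> \<open>m dvd k\<close> show False by blast
  qed
  ultimately show ?thesis using \<open>a \<noteq> 0\<close> unfolding k_simple_def by blast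
qed

lemma units_grp_simps [simp]:
  "carrier (units_grp P) = P - {0}"
  "x \<otimes>\<^bsub>units_grp P\<^esub> y = x * y"
  "\<one>\<^bsub>units_grp P\<^esub> = 1"
  by (simp_all add: units_grp_def)

lemma units_grp_pow [simp]: "x [^]\<^bsub>units_grp P\<^esub> (n::nat) = x ^ n"
  by (induction n) simp_all

lemma comm_group_units_grp:
  assumes P: "is_subfield P"
  shows "comm_group (units_grp P)"
proof (rule comm_groupI)
  fix x assume "x \<in> carrier (units_grp P)"
  then have "inverse x \<in> carrier (units_grp P)" "inverse x \<otimes>\<^bsub>units_grp P\<^esub> x = \<one>\<^bsub>units_grp P\<^esub>"
    using subfield_inverse[OF P] by auto
  then show "\<exists>y\<in>carrier (units_grp P). y \<otimes>\<^bsub>units_grp P\<^esub> x = \<one>\<^bsub>units_grp P\<^esub>" by blast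
qed (use P in \<open>auto simp: is_subfield_def mult.assoc mult.commute\<close>)

lemma units_grp_inv:
  assumes P: "is_subfield P" and "x \<in> P - {0}"
  shows "inv\<^bsub>units_grp P\<^esub> x = inverse x"
proof -
  interpret comm_group "units_grp P" using comm_group_units_grp[OF P] .
  show ?thesis using assms subfield_inverse[OF P] by (intro inv_equality) auto
qed

lemma normal_roots_of_unity_units_grp:
  assumes P: "is_subfield P"
  shows "P \<inter> roots_of_unity \<lhd> units_grp P"
proof -
  interpret comm_group "units_grp P" using comm_group_units_grp[OF P] .
  have "subgroup (P \<inter> roots_of_unity) (units_grp P)"
  proof
    fix x y assume x: "x \<in> P \<inter> roots_of_unity" and "y \<in> P \<inter> roots_of_unity"
    then show "x \<otimes>\<^bsub>units_grp P\<^esub> y \<in> P \<inter> roots_of_unity"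
      using P by (simp add: subfield_mult roots_of_unity_mult)
    have "inverse x \<in> roots_of_unity" using roots_of_unity_power_int[of x "-1"] x by simp
    then show "inv\<^bsub>units_grp P\<^esub> x \<in> P \<inter> roots_of_unity"
      using x units_grp_inv[OF P] subfield_inverse[OF P] roots_of_unity_nonzero by auto
  qed (use P roots_of_unity_nonzero in \<open>auto simp: is_subfield_def roots_of_unity_def\<close>)
  then show ?thesis by (rule subgroup_imp_normal)
qed

lemma power_up_to_root_of_unity_iff_FactGroup_root:
  assumes P: "is_subfield P" and "a \<in> P" "a \<noteq> 0" "m > 0"
  defines "C \<equiv> P \<inter> roots_of_unity"
  shows "power_up_to_root_of_unity P m a \<longleftrightarrow>
    (\<exists>y\<in>carrier (units_grp P Mod C). y [^]\<^bsub>units_grp P Mod C\<^esub> m = C #>\<^bsub>units_grp P\<^esub> a)"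
proof -
  interpret normal C "units_grp P" using normal_roots_of_unity_units_grp[OF P] unfolding C_def .
  have "power_up_to_root_of_unity P m a \<longleftrightarrow> (\<exists>x\<in>P - {0}. \<exists>\<epsilon>\<in>C. a = \<epsilon> * x ^ m)"
  proof
    assume "power_up_to_root_of_unity P m a"
    then obtain \<alpha> \<epsilon> where "\<alpha> \<in> P" "\<epsilon> \<in> roots_of_unity" and a: "a = \<alpha> ^ m * \<epsilon>"
      unfolding power_up_to_root_of_unity_def by blast
    then have "\<alpha> ^ m \<noteq> 0" "\<alpha> \<noteq> 0" using \<open>a \<noteq> 0\<close> \<open>m > 0\<close> by auto
    then have "\<epsilon> = a * inverse (\<alpha> ^ m)" using a by simp
    then have "\<epsilon> \<in> P" using P \<open>a \<in> P\<close> \<open>\<alpha> \<in> P\<close> by (simp add: subfield_mult subfield_inverse subfield_power)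
    then show "\<exists>x\<in>P - {0}. \<exists>\<epsilon>\<in>C. a = \<epsilon> * x ^ m"
      using a \<open>\<alpha> \<in> P\<close> \<open>\<alpha> \<noteq> 0\<close> \<open>\<epsilon> \<in> roots_of_unity\<close> unfolding C_def by (auto simp: mult.commute)
  qed (auto simp: power_up_to_root_of_unity_def C_def mult.commute)
  also have "\<dots> \<longleftrightarrow> (\<exists>x\<in>carrier (units_grp P). a \<in> C #>\<^bsub>units_grp P\<^esub> x [^]\<^bsub>units_grp P\<^esub> m)"
    by (simp add: r_coset_def)
  also have "\<dots> \<longleftrightarrow>
    (\<exists>y\<in>carrier (units_grp P Mod C). y [^]\<^bsub>units_grp P Mod C\<^esub> m = C #>\<^bsub>units_grp P\<^esub> a)"
    using \<open>a \<in> P\<close> \<open>a \<noteq> 0\<close> by (simp add: FactGroup_pow_eq_rcos_iff)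
  finally show ?thesis .
qed

theorem lemma2p8:
  fixes P :: "complex set" and a :: complex and k :: nat
  assumes "fin_gen_field P"
    and "a \<in> P" and "a \<noteq> 0"
    and "k > 1"
  defines "C \<equiv> P \<inter> roots_of_unity"
  shows "(k_simple P k a \<longleftrightarrow>
            (\<forall>m::nat. m > 1 \<and> m dvd k \<longrightarrow>
               \<not> (\<exists>\<alpha>\<in>P. \<exists>\<epsilon>\<in>roots_of_unity. a = \<alpha> ^ m * \<epsilon>)))
       \<and> ((\<forall>m::nat. m > 1 \<and> m dvd k \<longrightarrow>
               \<not> (\<exists>\<alpha>\<in>P. \<exists>\<epsilon>\<in>roots_of_unity. a = \<alpha> ^ m * \<epsilon>)) \<longleftrightarrow>
          (\<forall>m::nat. m > 1 \<and> m dvd k \<longrightarrow>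
               \<not> (\<exists>y\<in>carrier (units_grp P Mod C).
                    y [^]\<^bsub>units_grp P Mod C\<^esub> m = C #>\<^bsub>units_grp P\<^esub> a)))"
  unfolding power_up_to_root_of_unity_def[symmetric]
proof
  have P: "is_subfield P" using assms(1) by (simp add: fin_gen_field_def)
  show "k_simple P k a \<longleftrightarrow> (\<forall>m. m > 1 \<and> m dvd k \<longrightarrow> \<not> power_up_to_root_of_unity P m a)"
    using k_simple_imp_not_power_up_to_root_of_unity k_simple_if_not_power_up_to_root_of_unity[OF P]
      assms(2-4) by (metis gr_zeroI not_one_less_zero)
  show "(\<forall>m. m > 1 \<and> m dvd k \<longrightarrow> \<not> power_up_to_root_of_unity P m a) \<longleftrightarrow>
    (\<forall>m. m > 1 \<and> m dvd k \<longrightarrow> \<not> (\<exists>y\<in>carrier (units_grp P Mod C).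
       y [^]\<^bsub>units_grp P Mod C\<^esub> m = C #>\<^bsub>units_grp P\<^esub> a))"
    using power_up_to_root_of_unity_iff_FactGroup_root[OF P assms(2,3)] unfolding C_def
    by (metis gr_zeroI not_one_less_zero)
qed

end
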